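(* Let $X$ be a real random variable with distribution function $F$, $E|X|=\infty$, satisfying (Ha): $A(x)/(xH(x))\to\infty$ as $x\to\infty$. For $x>0$ let $\omega_x(\theta)=1-E[e^{i\theta X};|X|<x]$. Then $$|\omega_x'(\theta)|=A(x)\big\{1+o\big(\sqrt{|\theta|x}\big)\big\}$$ as $x\to\infty$, uniformly for $|\theta|>1/x$.
   Context: For $x\ge0$: $H(x)=1-F(x)+F(-x-0)$, $K(x)=1-F(x)-F(-x-0)$, $A(x)=\int_0^xK(t)dt$. $\omega_x'$ is the derivative in $\theta$. The notation means: $\big||\omega_x'(\theta)|-A(x)\big|\le \varepsilon(x)A(x)\sqrt{|\theta|x}$ for all $|\theta|>1/x$, with $\varepsilon(x)\to0$. *)

theory Defs
  imports "HOL-Probability.Probability"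
begin

definition distF :: "'a measure \<Rightarrow> ('a \<Rightarrow> real) \<Rightarrow> real \<Rightarrow> real" where
  "distF M X x = measure M {w \<in> space M. X w \<le> x}"

definition distF_left :: "'a measure \<Rightarrow> ('a \<Rightarrow> real) \<Rightarrow> real \<Rightarrow> real" where
  "distF_left M X x = measure M {w \<in> space M. X w < x}"

definition tailH :: "'a measure \<Rightarrow> ('a \<Rightarrow> real) \<Rightarrow> real \<Rightarrow> real" where
  "tailH M X x = 1 - distF M X x + distF_left M X (- x)"

definition tailK :: "'a measure \<Rightarrow> ('a \<Rightarrow> real) \<Rightarrow> real \<Rightarrow> real" where
  "tailK M X x = 1 - distF M X x - distF_left M X (- x)"

definition truncA :: "'a measure \<Rightarrow> ('a \<Rightarrow> real) \<Rightarrow> real \<Rightarrow> real" where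
  "truncA M X x = (LINT t:{0..x}|lborel. tailK M X t)"

definition omega :: "'a measure \<Rightarrow> ('a \<Rightarrow> real) \<Rightarrow> real \<Rightarrow> real \<Rightarrow> complex" where
  "omega M X x \<theta> = 1 - (LINT w:{w \<in> space M. \<bar>X w\<bar> < x}|M. cis (\<theta> * X w))"

end

(*
  omega_x'(theta) = -i E[X e^(i theta X); |X| < x] and A(x) = E[max (-x) (min x X)].
  Since |e^(ia) - 1| <= sqrt(2|a|), comparing the two integrands pointwise gives
  | |omega_x'(theta)| - A(x) | <= (sqrt 2 + 1) sqrt|theta| J(x), where
  J(x) = E[min(|X|,x)^(3/2)], as soon as |theta| x > 1 (on {|X| >= x} the integrands
  differ by x <= sqrt(|theta| x) x^(3/2)).

  It remains to show J(x) = o(sqrt x A(x)). Between t and u <= 2t, A decreases by at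
  most (u - t) H(t) and J increases by at most (u^(3/2) - t^(3/2)) H(t). Condition (Ha)
  makes t H(t) small compared with A(t), so for every c > 0 the function
  c sqrt t A(t) - J(t) is eventually nondecreasing; as E|X| = infinity forces
  J(x) -> infinity, this gives J(x) <= 2 c sqrt x A(x) for large x.
*)
theory Submission
  imports Defs
begin

lemma borel_measurable_prob_gt:
  fixes Y :: "'a \<Rightarrow> real"
  assumes "prob_space M" and "Y \<in> borel_measurable M"
  shows "(\<lambda>t. measure M {w\<in>space M. t < Y w}) \<in> borel_measurable borel"
proof -
  interpret prob_space M by fact
  have "mono (\<lambda>t. - measure M {w\<in>space M. t < Y w})"
    using assms(2) by (auto intro!: monoI finite_measure_mono)
  then have "(\<lambda>t. - measure M {w\<in>space M. t < Y w}) \<in> borel_measurable borel"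
    by (rule borel_measurable_mono)
  then show ?thesis by simp
qed

lemma set_integrable_prob_gt:
  fixes Y :: "'a \<Rightarrow> real"
  assumes "prob_space M" and "Y \<in> borel_measurable M"
  shows "set_integrable lborel {0..x} (\<lambda>t. measure M {w\<in>space M. t < Y w})"
proof -
  interpret prob_space M by fact
  show ?thesis unfolding set_integrable_def
    using borel_measurable_prob_gt[OF assms]
    by (intro integrableI_bounded_set_indicator[where B=1]) (auto simp: emeasure_lborel_Icc_eq)
qed

lemma set_integral_prob_gt_eq_expectation_min:
  fixes Y :: "'a \<Rightarrow> real"
  assumes "prob_space M" and Y: "Y \<in> borel_measurable M" and x: "0 \<le> x"
  shows "(LINT t:{0..x}|lborel. measure M {w\<in>space M. t < Y w}) = (\<integral>w. min (max (Y w) 0) x \<partial>M)"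
proof -
  interpret prob_space M by fact
  interpret pair_sigma_finite lborel M ..
  define g where "g = (\<lambda>t. measure M {w\<in>space M. t < Y w})"
  define f where "f = (\<lambda>t w. indicator {t. 0 \<le> t \<and> t \<le> x \<and> t < Y w} t :: ennreal)"
  have f_measurable: "case_prod f \<in> borel_measurable (lborel \<Otimes>\<^sub>M M)"
    unfolding f_def indicator_def using Y by measurable
  have integral_M: "(\<integral>\<^sup>+ w. f t w \<partial>M) = ennreal (indicator {0..x} t * g t)" for t
  proof -
    have "(\<integral>\<^sup>+ w. f t w \<partial>M) = (\<integral>\<^sup>+ w. indicator {0..x} t * indicator {w\<in>space M. t < Y w} w \<partial>M)"
      unfolding f_def by (intro nn_integral_cong) (auto simp: indicator_def)
    also have "\<dots> = indicator {0..x} t * emeasure M {w\<in>space M. t < Y w}"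
      using Y by (intro nn_integral_cmult_indicator) measurable
    finally show ?thesis
      by (auto simp: g_def emeasure_eq_measure indicator_def)
  qed
  have integral_lborel: "(\<integral>\<^sup>+ t. f t w \<partial>lborel) = ennreal (min (max (Y w) 0) x)" for w
  proof -
    have "{t. 0 \<le> t \<and> t \<le> x \<and> t < Y w} = (if x < Y w then {0..x} else {0..<Y w})"
      by auto
    then show ?thesis
      unfolding f_def using x by (simp add: max_def min_def)
  qed
  have "(LINT t:{0..x}|lborel. g t) = enn2real (\<integral>\<^sup>+ t. ennreal (indicator {0..x} t * g t) \<partial>lborel)"
    unfolding set_lebesgue_integral_def using borel_measurable_prob_gt[OF assms(1,2)]
    by (subst integral_eq_nn_integral) (auto simp: g_def)
  also have "\<dots> = enn2real (\<integral>\<^sup>+ w. (\<integral>\<^sup>+ t. f t w \<partial>lborel) \<partial>M)"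
    using Fubini'[OF f_measurable] by (simp add: integral_M)
  also have "\<dots> = (\<integral>w. min (max (Y w) 0) x \<partial>M)"
    using Y x by (simp add: integral_lborel integral_eq_nn_integral)
  finally show ?thesis unfolding g_def .
qed

lemma prob_gt_eq_1_minus_distF:
  assumes "prob_space M" and "X \<in> borel_measurable M"
  shows "measure M {w\<in>space M. t < X w} = 1 - distF M X t"
proof -
  interpret prob_space M by fact
  have "{w\<in>space M. t < X w} = space M - {w\<in>space M. X w \<le> t}" by auto
  then show ?thesis
    unfolding distF_def using assms(2) by (simp add: prob_compl)
qed

lemma tailK_eq_prob_diff:
  assumes "prob_space M" and "X \<in> borel_measurable M"
  shows "tailK M X t = measure M {w\<in>space M. t < X w} - measure M {w\<in>space M. t < - X w}"
proof -
  have "{w\<in>space M. t < - X w} = {w\<in>space M. X w < - t}" by auto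
  then show ?thesis
    unfolding tailK_def distF_left_def prob_gt_eq_1_minus_distF[OF assms] by simp
qed

lemma tailH_eq_prob_abs_gt:
  assumes "prob_space M" and X: "X \<in> borel_measurable M" and "0 \<le> t"
  shows "tailH M X t = measure M {w\<in>space M. t < \<bar>X w\<bar>}"
proof -
  interpret prob_space M by fact
  have "{w\<in>space M. t < \<bar>X w\<bar>} = {w\<in>space M. t < X w} \<union> {w\<in>space M. X w < - t}"
    using \<open>0 \<le> t\<close> by auto
  moreover have "measure M ({w\<in>space M. t < X w} \<union> {w\<in>space M. X w < - t})
      = measure M {w\<in>space M. t < X w} + measure M {w\<in>space M. X w < - t}"
    using X \<open>0 \<le> t\<close> by (intro finite_measure_Union) auto
  ultimately show ?thesis
    unfolding tailH_def distF_left_def prob_gt_eq_1_minus_distF[OF assms(1,2)] by simp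
qed

lemma truncA_eq_expectation_clamp:
  assumes P: "prob_space M" and X: "X \<in> borel_measurable M" and x: "0 \<le> x"
  shows "truncA M X x = (\<integral>w. max (- x) (min x (X w)) \<partial>M)"
proof -
  interpret prob_space M by fact
  have X': "(\<lambda>w. - X w) \<in> borel_measurable M" using X by measurable
  have clamp_integrable: "integrable M (\<lambda>w. min (max (Y w) 0) x)" if "Y \<in> borel_measurable M" for Y
    using that x by (intro integrable_const_bound[where B=x]) auto
  have "truncA M X x = (LINT t:{0..x}|lborel. measure M {w\<in>space M. t < X w})
      - (LINT t:{0..x}|lborel. measure M {w\<in>space M. t < - X w})"
    unfolding truncA_def tailK_eq_prob_diff[OF P X]
    by (intro set_integral_diff set_integrable_prob_gt[OF P X] set_integrable_prob_gt[OF P X'])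
  also have "\<dots> = (\<integral>w. min (max (X w) 0) x - min (max (- X w) 0) x \<partial>M)"
    using X X' x
    by (simp add: set_integral_prob_gt_eq_expectation_min[OF P] clamp_integrable)
  also have "\<dots> = (\<integral>w. max (- x) (min x (X w)) \<partial>M)"
    using x by (intro Bochner_Integration.integral_cong) auto
  finally show ?thesis .
qed

lemma norm_cis_minus_linear_le: "norm (cis b - 1 - \<i> * complex_of_real b) \<le> b^2 / 2"
  using iexp_approx1[of b 1] by (simp add: cis_conv_exp power2_eq_square diff_diff_eq)

lemma norm_cis_minus_1_le_sqrt: "norm (cis a - 1) \<le> sqrt 2 * sqrt \<bar>a\<bar>"
proof -
  have linear: "norm (cis a - 1) \<le> \<bar>a\<bar>"
    using iexp_approx1[of a 0] by (simp add: cis_conv_exp)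
  have bounded: "norm (cis a - 1) \<le> 2"
    using norm_triangle_ineq4[of "cis a" 1] by simp
  have "(norm (cis a - 1))^2 \<le> 2 * \<bar>a\<bar>"
    unfolding power2_eq_square using linear bounded by (intro mult_mono) auto
  then have "norm (cis a - 1) \<le> sqrt (2 * \<bar>a\<bar>)" by (rule real_le_rsqrt)
  then show ?thesis by (simp add: real_sqrt_mult)
qed

lemma has_vector_derivative_quadratic_remainder:
  fixes f :: "real \<Rightarrow> 'a::real_normed_vector"
  assumes remainder: "\<And>y. norm (f y - f \<theta> - (y - \<theta>) *\<^sub>R D) \<le> C * (y - \<theta>)^2"
  shows "(f has_vector_derivative D) (at \<theta>)"
  unfolding has_vector_derivative_def has_derivative_iff_norm
proof (intro conjI bounded_linear_scaleR_left)
  have "norm (norm (f y - f \<theta> - (y - \<theta>) *\<^sub>R D) / norm (y - \<theta>)) \<le> C * \<bar>y - \<theta>\<bar>" for y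
  proof (cases "y = \<theta>")
    case False
    have square: "C * (y - \<theta>)^2 = (C * \<bar>y - \<theta>\<bar>) * \<bar>y - \<theta>\<bar>"
      by (metis abs_mult_self_eq mult.assoc power2_eq_square)
    have "norm (f y - f \<theta> - (y - \<theta>) *\<^sub>R D) \<le> (C * \<bar>y - \<theta>\<bar>) * norm (y - \<theta>)"
      using remainder[of y] by (simp only: square real_norm_def)
    then show ?thesis using False by (simp add: divide_le_eq)
  qed simp
  moreover have "((\<lambda>y. C * \<bar>y - \<theta>\<bar>) \<longlongrightarrow> 0) (at \<theta>)"
    using tendsto_mult[OF tendsto_const tendsto_rabs_zero[OF LIM_zero[OF tendsto_ident_at]]]
    by simp
  ultimately show "((\<lambda>y. norm (f y - f \<theta> - (y - \<theta>) *\<^sub>R D) / norm (y - \<theta>)) \<longlongrightarrow> 0) (at \<theta>)"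
    by (rule Lim_null_comparison[OF always_eventually[OF allI]])
qed

lemma borel_measurable_cis_mult [measurable]:
  "X \<in> borel_measurable M \<Longrightarrow> (\<lambda>w. cis (t * X w)) \<in> borel_measurable M"
  by (rule measurable_compose[where f="\<lambda>w. t * X w" and g=cis])
    (auto intro!: borel_measurable_continuous_onI continuous_intros)

lemma omega_has_vector_derivative:
  assumes "prob_space M" and X: "X \<in> borel_measurable M"
  shows "(omega M X x has_vector_derivative
            - \<i> * (LINT w:{w\<in>space M. \<bar>X w\<bar> < x}|M. X w * cis (\<theta> * X w))) (at \<theta>)"
proof -
  interpret prob_space M by fact
  define S where "S = {w\<in>space M. \<bar>X w\<bar> < x}"
  define e where "e = (\<lambda>t w. indicator S w *\<^sub>R cis (t * X w))"
  define d where "d = (\<lambda>w. indicator S w *\<^sub>R (complex_of_real (X w) * cis (\<theta> * X w)))"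
  have S: "S \<in> sets M" unfolding S_def using X by measurable
  have e_integrable: "integrable M (e t)" for t
    unfolding e_def using S X
    by (intro integrableI_bounded_set_indicator[where B=1]) (auto simp: emeasure_eq_measure)
  have d_integrable: "integrable M d"
    unfolding d_def using S X
    by (intro integrableI_bounded_set_indicator[where B=x])
      (auto simp: norm_mult emeasure_eq_measure S_def)
  have omega_eq: "omega M X x t = 1 - (\<integral>w. e t w \<partial>M)" for t
    unfolding omega_def set_lebesgue_integral_def e_def S_def ..
  define R where "R = (\<lambda>y w. e y w - e \<theta> w - (y - \<theta>) *\<^sub>R (\<i> * d w))"
  have R_bound: "norm (R y w) \<le> x^2 / 2 * (y - \<theta>)^2" for y w
  proof (cases "w \<in> S")
    case True
    have "cis (y * X w) = cis (\<theta> * X w) * cis ((y - \<theta>) * X w)"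
      by (simp add: cis_mult left_diff_distrib)
    then have "R y w = cis (\<theta> * X w) * (cis ((y - \<theta>) * X w) - 1 - \<i> * complex_of_real ((y - \<theta>) * X w))"
      using True by (simp add: R_def e_def d_def scaleR_conv_of_real ring_distribs mult_ac)
    then have "norm (R y w) = norm (cis ((y - \<theta>) * X w) - 1 - \<i> * complex_of_real ((y - \<theta>) * X w))"
      by (simp only: norm_mult norm_cis mult_1)
    also have "\<dots> \<le> ((y - \<theta>) * X w)^2 / 2"
      by (rule norm_cis_minus_linear_le)
    also have "\<dots> \<le> x^2 / 2 * (y - \<theta>)^2"
    proof -
      have "(X w)^2 \<le> x^2"
        using True by (auto simp: S_def abs_le_square_iff[symmetric])
      then have "(X w)^2 * (y - \<theta>)^2 \<le> x^2 * (y - \<theta>)^2" by (rule mult_right_mono) simp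
      then show ?thesis by (simp add: power_mult_distrib mult.commute)
    qed
    finally show ?thesis .
  qed (simp add: R_def e_def d_def)
  have derivative_eq: "(LINT w:{w\<in>space M. \<bar>X w\<bar> < x}|M. X w * cis (\<theta> * X w)) = (\<integral>w. d w \<partial>M)"
    unfolding set_lebesgue_integral_def d_def S_def ..
  show ?thesis unfolding derivative_eq
  proof (rule has_vector_derivative_quadratic_remainder)
    fix y
    have "omega M X x y - omega M X x \<theta> - (y - \<theta>) *\<^sub>R (- \<i> * (\<integral>w. d w \<partial>M))
        = - (\<integral>w. R y w \<partial>M)"
    proof -
      have "(\<integral>w. R y w \<partial>M)
          = (\<integral>w. e y w \<partial>M) - (\<integral>w. e \<theta> w \<partial>M) - (y - \<theta>) *\<^sub>R (\<i> * (\<integral>w. d w \<partial>M))"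
        unfolding R_def using e_integrable d_integrable by simp
      then show ?thesis unfolding omega_eq by simp
    qed
    also have "norm \<dots> \<le> (\<integral>w. norm (R y w) \<partial>M)"
      by simp
    also have "\<dots> \<le> x^2 / 2 * (y - \<theta>)^2"
      unfolding R_def using e_integrable d_integrable R_bound
      by (intro integral_le_const) (auto simp: R_def)
    finally show "norm (omega M X x y - omega M X x \<theta> - (y - \<theta>) *\<^sub>R (- \<i> * (\<integral>w. d w \<partial>M)))
        \<le> x^2 / 2 * (y - \<theta>)^2" .
  qed
qed

definition truncJ :: "'a measure \<Rightarrow> ('a \<Rightarrow> real) \<Rightarrow> real \<Rightarrow> real" where
  "truncJ M X t = (\<integral>w. min \<bar>X w\<bar> t * sqrt (min \<bar>X w\<bar> t) \<partial>M)"

lemma norm_truncated_cis_minus_clamp_le: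
  fixes a x \<theta> :: real
  assumes x: "0 < x" and \<theta>: "1 < \<bar>\<theta>\<bar> * x"
  shows "norm ((if \<bar>a\<bar> < x then a * cis (\<theta> * a) else 0) - complex_of_real (max (- x) (min x a)))
    \<le> (sqrt 2 + 1) * sqrt \<bar>\<theta>\<bar> * (min \<bar>a\<bar> x * sqrt (min \<bar>a\<bar> x))"
proof (cases "\<bar>a\<bar> < x")
  case True
  then have "norm ((if \<bar>a\<bar> < x then a * cis (\<theta> * a) else 0) - complex_of_real (max (- x) (min x a)))
      = norm (complex_of_real a * (cis (\<theta> * a) - 1))"
    by (simp add: right_diff_distrib)
  also have "\<dots> = \<bar>a\<bar> * norm (cis (\<theta> * a) - 1)"
    by (simp add: norm_mult)
  also have "\<dots> \<le> \<bar>a\<bar> * (sqrt 2 * sqrt \<bar>\<theta> * a\<bar>)"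
    by (intro mult_left_mono norm_cis_minus_1_le_sqrt) auto
  also have "\<dots> = sqrt 2 * sqrt \<bar>\<theta>\<bar> * (\<bar>a\<bar> * sqrt \<bar>a\<bar>)"
    by (simp add: abs_mult real_sqrt_mult)
  also have "\<dots> \<le> (sqrt 2 + 1) * sqrt \<bar>\<theta>\<bar> * (\<bar>a\<bar> * sqrt \<bar>a\<bar>)"
    by (intro mult_right_mono) auto
  finally show ?thesis using True by simp
next
  case False
  have "1 \<le> sqrt (\<bar>\<theta>\<bar> * x)" using \<theta> by simp
  also have "\<dots> = 1 * (sqrt \<bar>\<theta>\<bar> * sqrt x)"
    by (simp add: real_sqrt_mult)
  also have "\<dots> \<le> (sqrt 2 + 1) * (sqrt \<bar>\<theta>\<bar> * sqrt x)"
    using x by (intro mult_right_mono) auto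
  finally have "x \<le> (sqrt 2 + 1) * sqrt \<bar>\<theta>\<bar> * (x * sqrt x)"
    using x mult_left_mono[of 1 _ x] by (simp add: mult_ac)
  then show ?thesis using False x by (auto simp: max_def min_def)
qed

lemma norm_omega_derivative_minus_truncA_le:
  assumes P: "prob_space M" and X: "X \<in> borel_measurable M"
    and x: "0 < x" and \<theta>: "1 < \<bar>\<theta>\<bar> * x" and A: "0 \<le> truncA M X x"
  shows "\<bar>norm (vector_derivative (omega M X x) (at \<theta>)) - truncA M X x\<bar>
    \<le> (sqrt 2 + 1) * sqrt \<bar>\<theta>\<bar> * truncJ M X x"
proof -
  interpret prob_space M by fact
  define K where "K = (sqrt 2 + 1) * sqrt \<bar>\<theta>\<bar>"
  define f where "f = (\<lambda>w. if \<bar>X w\<bar> < x then X w * cis (\<theta> * X w) else 0)"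
  define h where "h = (\<lambda>w. max (- x) (min x (X w)))"
  have f_integrable: "integrable M f"
    unfolding f_def using X x
    by (intro integrable_const_bound[where B=x]) (auto simp: norm_mult)
  have h_integrable: "integrable M h"
    unfolding h_def using X x by (intro integrable_const_bound[where B=x]) auto
  have J_integrable: "integrable M (\<lambda>w. K * (min \<bar>X w\<bar> x * sqrt (min \<bar>X w\<bar> x)))"
    using X x by (intro integrable_mult_right integrable_const_bound[where B="x * sqrt x"])
      (auto intro!: mult_mono)
  have "(LINT w:{w\<in>space M. \<bar>X w\<bar> < x}|M. X w * cis (\<theta> * X w)) = (\<integral>w. f w \<partial>M)"
    unfolding set_lebesgue_integral_def f_def
    by (intro Bochner_Integration.integral_cong) (auto simp: indicator_def)
  then have "(omega M X x has_vector_derivative - \<i> * (\<integral>w. f w \<partial>M)) (at \<theta>)"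
    using omega_has_vector_derivative[OF P X, of x \<theta>] by simp
  then have derivative_norm: "norm (vector_derivative (omega M X x) (at \<theta>)) = norm (\<integral>w. f w \<partial>M)"
    by (simp add: vector_derivative_at norm_mult)
  have truncA_norm: "truncA M X x = norm (complex_of_real (\<integral>w. h w \<partial>M))"
    using truncA_eq_expectation_clamp[OF P X] x A by (simp add: h_def)
  have "\<bar>norm (vector_derivative (omega M X x) (at \<theta>)) - truncA M X x\<bar>
      = \<bar>norm (\<integral>w. f w \<partial>M) - norm (complex_of_real (\<integral>w. h w \<partial>M))\<bar>"
    by (simp only: derivative_norm truncA_norm)
  also have "\<dots> \<le> norm ((\<integral>w. f w \<partial>M) - complex_of_real (\<integral>w. h w \<partial>M))"
    by (rule norm_triangle_ineq3)
  also have "\<dots> = norm (\<integral>w. f w - complex_of_real (h w) \<partial>M)"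
    using f_integrable h_integrable by simp
  also have "\<dots> \<le> (\<integral>w. norm (f w - complex_of_real (h w)) \<partial>M)"
    by (rule integral_norm_bound)
  also have "\<dots> \<le> (\<integral>w. K * (min \<bar>X w\<bar> x * sqrt (min \<bar>X w\<bar> x)) \<partial>M)"
    using f_integrable h_integrable J_integrable
      norm_truncated_cis_minus_clamp_le[OF x \<theta>]
    by (intro integral_mono) (auto simp: f_def h_def K_def)
  finally show ?thesis by (simp add: truncJ_def K_def)
qed

lemma integral_le_mult_prob:
  fixes f :: "'a \<Rightarrow> real"
  assumes "prob_space M" and "integrable M f" and S: "S \<in> sets M"
    and "\<And>w. w \<in> space M \<Longrightarrow> f w \<le> c * indicator S w"
  shows "(\<integral>w. f w \<partial>M) \<le> c * measure M S"
proof -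
  interpret prob_space M by fact
  have "(\<integral>w. f w \<partial>M) \<le> (\<integral>w. c * indicator S w \<partial>M)"
    using assms by (intro integral_mono) (auto simp: emeasure_eq_measure)
  also have "\<dots> = c * measure M S" using S by (simp add: Int_absorb2 sets.sets_into_space)
  finally show ?thesis .
qed

lemma truncA_diff_le_tailH:
  assumes P: "prob_space M" and X: "X \<in> borel_measurable M" and "0 \<le> t" "t \<le> u"
  shows "truncA M X t - (u - t) * tailH M X t \<le> truncA M X u"
proof -
  interpret prob_space M by fact
  have clamp_integrable: "integrable M (\<lambda>w. max (- v) (min v (X w)))" if "0 \<le> v" for v
    using X that by (intro integrable_const_bound[where B=v]) auto
  have "truncA M X t - truncA M X u = (\<integral>w. max (- t) (min t (X w)) - max (- u) (min u (X w)) \<partial>M)"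
    using assms clamp_integrable by (simp add: truncA_eq_expectation_clamp)
  also have "\<dots> \<le> (u - t) * measure M {w\<in>space M. t < \<bar>X w\<bar>}"
    using assms clamp_integrable
    by (intro integral_le_mult_prob Bochner_Integration.integrable_diff) (auto simp: indicator_def)
  finally show ?thesis using assms by (simp add: tailH_eq_prob_abs_gt)
qed

lemma truncJ_diff_le_tailH:
  assumes P: "prob_space M" and X: "X \<in> borel_measurable M" and "0 \<le> t" "t \<le> u"
  shows "truncJ M X u - (u * sqrt u - t * sqrt t) * tailH M X t \<le> truncJ M X t"
proof -
  interpret prob_space M by fact
  define j where "j = (\<lambda>v w. min \<bar>X w\<bar> v * sqrt (min \<bar>X w\<bar> v))"
  have j_bound: "0 \<le> j v w \<and> j v w \<le> v * sqrt v" if "0 \<le> v" for v w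
    unfolding j_def using that by (auto intro!: mult_mono)
  have j_integrable: "integrable M (j v)" if "0 \<le> v" for v
    using X j_bound[OF that] by (intro integrable_const_bound[where B="v * sqrt v"]) (auto simp: j_def)
  have "j u w - j t w \<le> (u * sqrt u - t * sqrt t) * indicator {w\<in>space M. t < \<bar>X w\<bar>} w"
    if "w \<in> space M" for w
  proof (cases "t < \<bar>X w\<bar>")
    case True
    have "j u w \<le> u * sqrt u" using j_bound[of u w] \<open>0 \<le> t\<close> \<open>t \<le> u\<close> by simp
    then show ?thesis using True that by (simp add: j_def indicator_def)
  next
    case False
    then show ?thesis using \<open>t \<le> u\<close> by (simp add: j_def indicator_def)
  qed
  then have "(\<integral>w. j u w - j t w \<partial>M) \<le> (u * sqrt u - t * sqrt t) * measure M {w\<in>space M. t < \<bar>X w\<bar>}"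
    using X assms j_integrable by (intro integral_le_mult_prob[OF P] Bochner_Integration.integrable_diff) auto
  then show ?thesis
    using assms j_integrable by (simp add: truncJ_def j_def tailH_eq_prob_abs_gt)
qed

lemma expectation_min_abs_tendsto_at_top:
  assumes P: "prob_space M" and X: "X \<in> borel_measurable M"
    and infinite: "(\<integral>\<^sup>+ w. ennreal \<bar>X w\<bar> \<partial>M) = \<infinity>"
  shows "filterlim (\<lambda>t. \<integral>w. min \<bar>X w\<bar> t \<partial>M) at_top at_top"
proof -
  interpret prob_space M by fact
  define E where "E = (\<lambda>t. \<integral>w. min \<bar>X w\<bar> t \<partial>M)"
  have min_integrable: "integrable M (\<lambda>w. min \<bar>X w\<bar> t)" if "0 \<le> t" for t
    using X that by (intro integrable_const_bound[where B=t]) auto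
  have E_mono: "E s \<le> E t" if "0 \<le> s" "s \<le> t" for s t
    unfolding E_def using min_integrable that by (intro integral_mono) auto
  have "(\<integral>\<^sup>+ w. ennreal \<bar>X w\<bar> \<partial>M) = (\<integral>\<^sup>+ w. (SUP n. ennreal (min \<bar>X w\<bar> (real n))) \<partial>M)"
  proof (intro nn_integral_cong)
    fix w
    obtain N :: nat where "\<bar>X w\<bar> \<le> real N" using real_arch_simple by blast
    then show "ennreal \<bar>X w\<bar> = (SUP n. ennreal (min \<bar>X w\<bar> (real n)))"
      by (intro antisym SUP_upper2[of N] SUP_least) auto
  qed
  also have "\<dots> = (SUP n. \<integral>\<^sup>+ w. ennreal (min \<bar>X w\<bar> (real n)) \<partial>M)"
    using X by (intro nn_integral_monotone_convergence_SUP) (auto simp: incseq_def le_fun_def)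
  also have "\<dots> = (SUP n. ennreal (E (real n)))"
    unfolding E_def using min_integrable by (simp add: nn_integral_eq_integral)
  finally have E_unbounded: "(SUP n. ennreal (E (real n))) = \<infinity>"
    using infinite by simp
  show ?thesis
    unfolding filterlim_at_top
  proof
    fix Z :: real
    have "ennreal (max 0 Z) < (SUP n. ennreal (E (real n)))"
      unfolding E_unbounded by simp
    then obtain n :: nat where "ennreal (max 0 Z) < ennreal (E (real n))"
      by (auto simp: less_SUP_iff)
    then have "Z \<le> E (real n)"
      by (subst (asm) ennreal_less_iff) auto
    then have "Z \<le> E t" if "real n \<le> t" for t
      using E_mono[of "real n" t] that by simp
    then show "eventually (\<lambda>t. Z \<le> \<integral>w. min \<bar>X w\<bar> t \<partial>M) at_top"
      unfolding E_def eventually_at_top_linorder by blast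
  qed
qed

lemma truncJ_tendsto_at_top:
  assumes P: "prob_space M" and X: "X \<in> borel_measurable M"
    and infinite: "(\<integral>\<^sup>+ w. ennreal \<bar>X w\<bar> \<partial>M) = \<infinity>"
  shows "filterlim (truncJ M X) at_top at_top"
proof -
  interpret prob_space M by fact
  have sub_one_le: "m - 1 \<le> m * sqrt m" if "0 \<le> m" for m :: real
  proof (cases "1 \<le> m")
    case True
    then have "m * 1 \<le> m * sqrt m" by (intro mult_left_mono) auto
    then show ?thesis by simp
  next
    case False
    moreover have "0 \<le> m * sqrt m" using that by simp
    ultimately show ?thesis by linarith
  qed
  then have "(\<integral>w. min \<bar>X w\<bar> t \<partial>M) - 1 \<le> truncJ M X t" if "0 \<le> t" for t
  proof -
    have min_integrable: "integrable M (\<lambda>w. min \<bar>X w\<bar> t)"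
      using X that by (intro integrable_const_bound[where B=t]) auto
    have "integrable M (\<lambda>w. min \<bar>X w\<bar> t * sqrt (min \<bar>X w\<bar> t))"
      using X that by (intro integrable_const_bound[where B="t * sqrt t"]) (auto intro!: mult_mono)
    then have "(\<integral>w. min \<bar>X w\<bar> t - 1 \<partial>M) \<le> truncJ M X t"
      unfolding truncJ_def using min_integrable that
      by (intro integral_mono sub_one_le) auto
    then show ?thesis using min_integrable by (simp add: prob_space)
  qed
  moreover have "filterlim (\<lambda>t. - 1 + (\<integral>w. min \<bar>X w\<bar> t \<partial>M)) at_top at_top"
    by (rule filterlim_tendsto_add_at_top[OF tendsto_const expectation_min_abs_tendsto_at_top[OF assms]])
  ultimately show ?thesis
    by (elim filterlim_at_top_mono) (auto simp: eventually_at_top_linorder)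
qed

lemma mono_on_atLeast_of_doubling_steps:
  fixes \<phi> :: "real \<Rightarrow> real"
  assumes "0 < T" and step: "\<And>t u. T \<le> t \<Longrightarrow> t \<le> u \<Longrightarrow> u \<le> 2 * t \<Longrightarrow> \<phi> t \<le> \<phi> u"
  shows "mono_on {T..} \<phi>"
proof (rule mono_onI)
  have doubling: "\<phi> t \<le> \<phi> u" if "T \<le> t" "t \<le> u" "u \<le> 2 ^ n * t" for n t u
    using that
  proof (induction n arbitrary: t)
    case (Suc n)
    show ?case
    proof (cases "u \<le> 2 * t")
      case False
      have "\<phi> t \<le> \<phi> (2 * t)" using step[of t "2 * t"] Suc.prems \<open>0 < T\<close> by simp
      also have "\<dots> \<le> \<phi> u" using Suc.IH[of "2 * t"] Suc.prems False \<open>0 < T\<close> by (simp add: mult_ac)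
      finally show ?thesis .
    qed (use Suc.prems step in auto)
  qed simp
  fix t u assume t: "t \<in> {T..}" and "u \<in> {T..}" "t \<le> u"
  obtain n where "u / t < 2 ^ n" using real_arch_pow[of 2 "u / t"] by auto
  moreover have "0 < t" using t \<open>0 < T\<close> by simp
  ultimately have "u \<le> 2 ^ n * t" by (simp add: pos_divide_less_eq)
  then show "\<phi> t \<le> \<phi> u" using doubling[of t u n] t \<open>t \<le> u\<close> by simp
qed

lemma sqrt_scaled_difference_step:
  fixes c t u a a' j j' h :: real
  assumes tu: "0 < t" "t \<le> u" "u \<le> 2 * t" and h: "0 \<le> h" and c: "0 \<le> c"
    and a: "a - (u - t) * h \<le> a'" and j: "j' - (u * sqrt u - t * sqrt t) * h \<le> j"
    and small: "(4 * c + 5) * t * h \<le> c * a"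
  shows "c * sqrt t * a - j \<le> c * sqrt u * a' - j'"
proof -
  define s where "s = sqrt t"
  define r where "r = sqrt u"
  have s: "0 < s" "t = s^2" and r: "s \<le> r" "u = r^2"
    using tu by (simp_all add: s_def r_def)
  have r_le: "r^2 \<le> 2 * s^2" using tu s r by simp
  have "(3/2 * s)^2 = 9/4 * s^2" by (simp add: power2_eq_square)
  then have "r^2 \<le> (3/2 * s)^2"
    using r_le zero_le_power2[of s] by linarith
  then have "r \<le> 3/2 * s" by (rule power2_le_imp_le) (use s in simp)
  then have rs: "r * s \<le> 3/2 * s^2" using s by (simp add: power2_eq_square mult_right_mono)
  have "r * (r + s) \<le> 4 * s^2"
    using r_le rs zero_le_power2[of s]
    unfolding distrib_left power2_eq_square[of r, symmetric] by linarith
  then have "c * (r * (r + s)) \<le> c * (4 * s^2)"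
    using c by (rule mult_left_mono)
  moreover have "r^2 + r * s + s^2 \<le> 5 * s^2" using r_le rs zero_le_power2[of s] by linarith
  ultimately have "(c * r * (r + s) + (r^2 + r * s + s^2)) * h \<le> ((4 * c + 5) * s^2) * h"
    using h by (intro mult_right_mono) (auto simp: algebra_simps)
  moreover have "((4 * c + 5) * s^2) * h \<le> c * a" using small s by simp
  ultimately have gap: "0 \<le> (r - s) * (c * a - (c * r * (r + s) + (r^2 + r * s + s^2)) * h)"
    using r by simp
  have "c * r * (a - (r^2 - s^2) * h) \<le> c * r * a'"
    using a s r c by (intro mult_left_mono) auto
  moreover have "u * sqrt u = r^2 * r" "t * sqrt t = s^2 * s"
    using tu by (simp_all add: r_def s_def)
  then have "j' \<le> j + (r^2 * r - s^2 * s) * h"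
    using j by simp
  moreover have "c * r * (a - (r^2 - s^2) * h) - (j + (r^2 * r - s^2 * s) * h) - (c * s * a - j)
      = (r - s) * (c * a - (c * r * (r + s) + (r^2 + r * s + s^2)) * h)"
    by (simp add: algebra_simps power2_eq_square)
  ultimately show ?thesis
    using gap unfolding s_def[symmetric] r_def[symmetric] by linarith
qed

lemma truncA_eventually_dominates_tailH:
  assumes P: "prob_space M" and X: "X \<in> borel_measurable M"
    and Ha: "filterlim (\<lambda>x. truncA M X x / (x * tailH M X x)) at_top at_top" and K: "0 < K"
  shows "eventually (\<lambda>t. 0 < truncA M X t \<and> K * t * tailH M X t \<le> truncA M X t) at_top"
proof -
  have "eventually (\<lambda>t. K \<le> truncA M X t / (t * tailH M X t)) at_top"
    using Ha unfolding filterlim_at_top by blast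
  moreover have "eventually (\<lambda>t::real. 0 < t) at_top" by (rule eventually_gt_at_top)
  ultimately show ?thesis
  proof eventually_elim
    case (elim t)
    then have "0 \<le> t * tailH M X t"
      using P X by (simp add: tailH_eq_prob_abs_gt)
    moreover have "t * tailH M X t \<noteq> 0" using elim K by auto
    ultimately have "0 < t * tailH M X t" by linarith
    then have "K * (t * tailH M X t) \<le> truncA M X t" using elim by (simp add: le_divide_eq)
    moreover have "0 < K * (t * tailH M X t)" using K \<open>0 < t * tailH M X t\<close> by simp
    ultimately show ?case by (simp add: mult.assoc)
  qed
qed

lemma truncJ_le_sqrt_truncA_eventually:
  assumes P: "prob_space M" and X: "X \<in> borel_measurable M"
    and infinite: "(\<integral>\<^sup>+ w. ennreal \<bar>X w\<bar> \<partial>M) = \<infinity>"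
    and Ha: "filterlim (\<lambda>x. truncA M X x / (x * tailH M X x)) at_top at_top" and c: "0 < c"
  shows "eventually (\<lambda>x. truncJ M X x \<le> 2 * c * sqrt x * truncA M X x) at_top"
proof -
  have "eventually (\<lambda>t. 1 \<le> t \<and> 0 < truncA M X t \<and> (4 * c + 5) / c * t * tailH M X t \<le> truncA M X t) at_top"
    using eventually_ge_at_top[of 1] truncA_eventually_dominates_tailH[OF P X Ha, of "(4 * c + 5) / c"] c
    by (auto intro: eventually_conj)
  then obtain T where T: "\<And>t. T \<le> t \<Longrightarrow>
      1 \<le> t \<and> 0 < truncA M X t \<and> (4 * c + 5) / c * t * tailH M X t \<le> truncA M X t"
    unfolding eventually_at_top_linorder by blast
  then have "0 < T" by force
  define \<phi> where "\<phi> = (\<lambda>t. c * sqrt t * truncA M X t - truncJ M X t)"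
  have "mono_on {T..} \<phi>"
  proof (rule mono_on_atLeast_of_doubling_steps[OF \<open>0 < T\<close>])
    fix t u assume tu: "T \<le> t" "t \<le> u" "u \<le> 2 * t"
    then have "0 < t" using \<open>0 < T\<close> by simp
    have small: "(4 * c + 5) * t * tailH M X t \<le> c * truncA M X t"
      using T[OF tu(1)] c by (simp add: field_simps)
    have "0 \<le> tailH M X t"
      using \<open>0 < t\<close> by (simp add: tailH_eq_prob_abs_gt[OF P X])
    with tu \<open>0 < t\<close> c show "\<phi> t \<le> \<phi> u"
      unfolding \<phi>_def
      by (intro sqrt_scaled_difference_step[OF _ _ _ _ _ _ _ small]
          truncA_diff_le_tailH[OF P X] truncJ_diff_le_tailH[OF P X]) auto
  qed
  moreover have "eventually (\<lambda>x. 2 * truncJ M X T \<le> truncJ M X x \<and> T \<le> x) at_top"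
    using truncJ_tendsto_at_top[OF P X infinite] unfolding filterlim_at_top
    by (intro eventually_conj eventually_ge_at_top) blast
  ultimately show ?thesis
  proof (elim eventually_mono conjE)
    fix x assume "mono_on {T..} \<phi>" "2 * truncJ M X T \<le> truncJ M X x" "T \<le> x"
    moreover have "0 \<le> c * sqrt T * truncA M X T" using T[of T] c by simp
    ultimately show "truncJ M X x \<le> 2 * c * sqrt x * truncA M X x"
      unfolding \<phi>_def by (auto dest!: mono_onD[of _ _ T x])
  qed
qed

lemma truncJ_over_sqrt_truncA_tendsto_0:
  assumes P: "prob_space M" and X: "X \<in> borel_measurable M"
    and infinite: "(\<integral>\<^sup>+ w. ennreal \<bar>X w\<bar> \<partial>M) = \<infinity>"
    and Ha: "filterlim (\<lambda>x. truncA M X x / (x * tailH M X x)) at_top at_top"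
  shows "((\<lambda>x. truncJ M X x / (sqrt x * truncA M X x)) \<longlongrightarrow> 0) at_top"
proof -
  have pos: "eventually (\<lambda>x. 0 < x \<and> 0 < truncA M X x) at_top"
    using eventually_gt_at_top[of "0::real"] truncA_eventually_dominates_tailH[OF P X Ha zero_less_one]
    by eventually_elim auto
  have J_nonneg: "0 \<le> truncJ M X x" if "0 \<le> x" for x
    unfolding truncJ_def using that by (intro integral_nonneg_AE) auto
  show ?thesis
  proof (rule order_tendstoI)
    fix a :: real
    assume "a < 0"
    from pos show "eventually (\<lambda>x. a < truncJ M X x / (sqrt x * truncA M X x)) at_top"
      by eventually_elim (use \<open>a < 0\<close> J_nonneg in \<open>auto intro: less_le_trans\<close>)
  next
    fix a :: real
    assume "0 < a"
    then have "0 < a / 4" by simp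
    from pos truncJ_le_sqrt_truncA_eventually[OF P X infinite Ha this]
    show "eventually (\<lambda>x. truncJ M X x / (sqrt x * truncA M X x) < a) at_top"
    proof eventually_elim
      case (elim x)
      moreover have "0 < a * (sqrt x * truncA M X x)" using elim \<open>0 < a\<close> by simp
      ultimately have "truncJ M X x < a * (sqrt x * truncA M X x)"
        by (simp add: mult.assoc)
      then show ?case using elim by (simp add: divide_less_eq)
    qed
  qed
qed

theorem lemma7:
  fixes M :: "'a measure" and X :: "'a \<Rightarrow> real"
  assumes "prob_space M"
    and "X \<in> borel_measurable M"
    and "(\<integral>\<^sup>+ w. ennreal \<bar>X w\<bar> \<partial>M) = \<infinity>"
    and "filterlim (\<lambda>x. truncA M X x / (x * tailH M X x)) at_top at_top"
  shows "\<exists>\<epsilon> :: real \<Rightarrow> real. (\<epsilon> \<longlongrightarrow> 0) at_top \<and>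
           (\<forall>\<^sub>F x in at_top. \<forall>\<theta>. \<bar>\<theta>\<bar> > 1 / x \<longrightarrow>
              \<bar>norm (vector_derivative (omega M X x) (at \<theta>)) - truncA M X x\<bar>
                \<le> \<epsilon> x * truncA M X x * sqrt (\<bar>\<theta>\<bar> * x))"
proof -
  define \<epsilon> where "\<epsilon> = (\<lambda>x. (sqrt 2 + 1) * (truncJ M X x / (sqrt x * truncA M X x)))"
  have "(\<epsilon> \<longlongrightarrow> 0) at_top"
    unfolding \<epsilon>_def by (intro tendsto_mult_right_zero truncJ_over_sqrt_truncA_tendsto_0 assms)
  moreover have "\<forall>\<^sub>F x in at_top. \<forall>\<theta>. \<bar>\<theta>\<bar> > 1 / x \<longrightarrow>
      \<bar>norm (vector_derivative (omega M X x) (at \<theta>)) - truncA M X x\<bar>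
        \<le> \<epsilon> x * truncA M X x * sqrt (\<bar>\<theta>\<bar> * x)"
    using eventually_gt_at_top[of "0::real"] truncA_eventually_dominates_tailH[OF assms(1,2,4) zero_less_one]
  proof eventually_elim
    case (elim x)
    show ?case
    proof (intro allI impI)
      fix \<theta> :: real
      assume "\<bar>\<theta>\<bar> > 1 / x"
      then have "1 < \<bar>\<theta>\<bar> * x" using elim by (simp add: divide_less_eq)
      with elim have "\<bar>norm (vector_derivative (omega M X x) (at \<theta>)) - truncA M X x\<bar>
          \<le> (sqrt 2 + 1) * sqrt \<bar>\<theta>\<bar> * truncJ M X x"
        by (intro norm_omega_derivative_minus_truncA_le assms(1,2)) auto
      also have "\<dots> = \<epsilon> x * truncA M X x * sqrt (\<bar>\<theta>\<bar> * x)"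
        using elim by (simp add: \<epsilon>_def real_sqrt_mult)
      finally show "\<bar>norm (vector_derivative (omega M X x) (at \<theta>)) - truncA M X x\<bar>
          \<le> \<epsilon> x * truncA M X x * sqrt (\<bar>\<theta>\<bar> * x)" .
    qed
  qed
  ultimately show ?thesis by blast
qed

end
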